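(* The price of anarchy (supremum over all weights $w_1,w_2\ge0$ with $w_1+w_2>0$ and all instances, with respect to subgame-perfect equilibria) for sequential two-player weighted congestion games with affine costs and proportional cost functions is equal to $1.5$; for fixed weights, the price of anarchy equals $1.5$ if and only if $w_1=w_2$.
   Context: A weighted two-player congestion game with affine costs consists of a finite set $R$ of resources, coefficients $\alpha_r,\beta_r \geq 0$ for each $r\in R$, two players $i=1,2$ with weights $w_i\ge 0$, and for each player $i$ a nonempty finite set $\mathcal{A}_i \subseteq 2^R$ of actions. For an action profile $A=(A_1,A_2)$ the load of $r$ is $x_r(A)=\sum_{j:\, r\in A_j} w_j$. With proportional costs, player $i$ pays $C_i(A)=w_i\sum_{r\in A_i}(\alpha_r+\beta_r x_r(A))$. The social cost is $C(A)=C_1(A)+C_2(A)$. In the sequential game, player 1 chooses $A_1$ first, then player 2, knowing $A_1$, chooses $A_2$. A subgame-perfect equilibrium consists of a function $A_1\mapsto A_2^*(A_1)$ with $C_2(A_1,A_2^*(A_1))\le C_2(A_1,A_2)$ for all $A_1,A_2$, and an action $A_1^*$ with $C_1(A_1^*,A_2^*(A_1^* ))\le C_1(A_1,A_2^*(A_1))$ for all $A_1$; its outcome is $(A_1^*,A_2^*(A_1^* ))$. The price of anarchy of an instance is the maximum over subgame-perfect equilibrium outcomes $A$ of $C(A)/\min_{A'}C(A')$; the price of anarchy of a class (for fixed or arbitrary weights) is the supremum over all instances (with positive optimal social cost). *)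

theory Defs
  imports "HOL-Analysis.Analysis" "HOL-Library.Extended_Real"
begin

text \<open>Resources are natural numbers drawn from a finite set R; actions are subsets of R.
  An instance is (R, alpha, beta, X1, X2) where Xi is the action set of player i.\<close>

definition load :: "real \<Rightarrow> real \<Rightarrow> nat set \<Rightarrow> nat set \<Rightarrow> nat \<Rightarrow> real" where
  "load w1 w2 A1 A2 r = (if r \<in> A1 then w1 else 0) + (if r \<in> A2 then w2 else 0)"

definition cost1 :: "real \<Rightarrow> real \<Rightarrow> (nat \<Rightarrow> real) \<Rightarrow> (nat \<Rightarrow> real) \<Rightarrow> nat set \<Rightarrow> nat set \<Rightarrow> real" where
  "cost1 w1 w2 \<alpha> \<beta> A1 A2 = w1 * (\<Sum>r\<in>A1. \<alpha> r + \<beta> r * load w1 w2 A1 A2 r)"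

definition cost2 :: "real \<Rightarrow> real \<Rightarrow> (nat \<Rightarrow> real) \<Rightarrow> (nat \<Rightarrow> real) \<Rightarrow> nat set \<Rightarrow> nat set \<Rightarrow> real" where
  "cost2 w1 w2 \<alpha> \<beta> A1 A2 = w2 * (\<Sum>r\<in>A2. \<alpha> r + \<beta> r * load w1 w2 A1 A2 r)"

definition social_cost :: "real \<Rightarrow> real \<Rightarrow> (nat \<Rightarrow> real) \<Rightarrow> (nat \<Rightarrow> real) \<Rightarrow> nat set \<Rightarrow> nat set \<Rightarrow> real" where
  "social_cost w1 w2 \<alpha> \<beta> A1 A2 = cost1 w1 w2 \<alpha> \<beta> A1 A2 + cost2 w1 w2 \<alpha> \<beta> A1 A2"

definition valid_instance :: "nat set \<Rightarrow> (nat \<Rightarrow> real) \<Rightarrow> (nat \<Rightarrow> real) \<Rightarrow> nat set set \<Rightarrow> nat set set \<Rightarrow> bool" where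
  "valid_instance R \<alpha> \<beta> X1 X2 \<longleftrightarrow> finite R \<and> (\<forall>r\<in>R. \<alpha> r \<ge> 0 \<and> \<beta> r \<ge> 0)
     \<and> X1 \<noteq> {} \<and> X1 \<subseteq> Pow R \<and> X2 \<noteq> {} \<and> X2 \<subseteq> Pow R"

definition spe_outcomes :: "real \<Rightarrow> real \<Rightarrow> (nat \<Rightarrow> real) \<Rightarrow> (nat \<Rightarrow> real) \<Rightarrow> nat set set \<Rightarrow> nat set set
    \<Rightarrow> (nat set \<times> nat set) set" where
  "spe_outcomes w1 w2 \<alpha> \<beta> X1 X2 =
     {(A1, f A1) | A1 f. A1 \<in> X1
        \<and> (\<forall>B\<in>X1. f B \<in> X2 \<and> (\<forall>A2\<in>X2. cost2 w1 w2 \<alpha> \<beta> B (f B) \<le> cost2 w1 w2 \<alpha> \<beta> B A2))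
        \<and> (\<forall>B\<in>X1. cost1 w1 w2 \<alpha> \<beta> A1 (f A1) \<le> cost1 w1 w2 \<alpha> \<beta> B (f B))}"

definition opt_cost :: "real \<Rightarrow> real \<Rightarrow> (nat \<Rightarrow> real) \<Rightarrow> (nat \<Rightarrow> real) \<Rightarrow> nat set set \<Rightarrow> nat set set \<Rightarrow> real" where
  "opt_cost w1 w2 \<alpha> \<beta> X1 X2 = Min ((\<lambda>(A1, A2). social_cost w1 w2 \<alpha> \<beta> A1 A2) ` (X1 \<times> X2))"

definition poa_instance :: "real \<Rightarrow> real \<Rightarrow> (nat \<Rightarrow> real) \<Rightarrow> (nat \<Rightarrow> real) \<Rightarrow> nat set set \<Rightarrow> nat set set \<Rightarrow> ereal" where
  "poa_instance w1 w2 \<alpha> \<beta> X1 X2 =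
     (SUP A \<in> spe_outcomes w1 w2 \<alpha> \<beta> X1 X2.
        ereal (social_cost w1 w2 \<alpha> \<beta> (fst A) (snd A) / opt_cost w1 w2 \<alpha> \<beta> X1 X2))"

definition poa_weights :: "real \<Rightarrow> real \<Rightarrow> ereal" where
  "poa_weights w1 w2 =
     (SUP I \<in> {(R, \<alpha>, \<beta>, X1, X2). valid_instance R \<alpha> \<beta> X1 X2 \<and> opt_cost w1 w2 \<alpha> \<beta> X1 X2 > 0}.
        (case I of (R, \<alpha>, \<beta>, X1, X2) \<Rightarrow> poa_instance w1 w2 \<alpha> \<beta> X1 X2))"

end

theory Submission
  imports Defs
begin

text \<open>Let \<open>A = (A1, A2)\<close> be an SPE outcome, \<open>O = (O1, O2)\<close> an optimum and \<open>B2\<close> player 2's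
  equilibrium reply to \<open>O1\<close>. With \<open>D = w1\<^sup>2 + w2\<^sup>2\<close> and \<open>\<rho> = w1\<^sup>2 + w1 w2 + w2\<^sup>2\<close>, an
  inequality between affine costs that holds resource by resource, combined with the three
  equilibrium conditions \<open>C2(A) \<le> C2(A1, B2)\<close>, \<open>C1(A) \<le> C1(O1, B2)\<close> and
  \<open>C2(O1, B2) \<le> C2(O)\<close>, gives \<open>D C(A) \<le> \<rho> C(O)\<close>. The ratio \<open>\<rho> / D\<close> is at most \<open>3/2\<close>,
  with equality exactly for \<open>w1 = w2\<close>, and for equal weights a three-resource instance
  attains \<open>3/2\<close>.\<close>

definition resource_cost1 :: "real \<Rightarrow> real \<Rightarrow> (nat \<Rightarrow> real) \<Rightarrow> (nat \<Rightarrow> real) \<Rightarrow> nat set \<Rightarrow> nat set \<Rightarrow> nat \<Rightarrow> real" where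
  "resource_cost1 w1 w2 \<alpha> \<beta> A1 A2 r = (if r \<in> A1 then w1 * (\<alpha> r + \<beta> r * load w1 w2 A1 A2 r) else 0)"

definition resource_cost2 :: "real \<Rightarrow> real \<Rightarrow> (nat \<Rightarrow> real) \<Rightarrow> (nat \<Rightarrow> real) \<Rightarrow> nat set \<Rightarrow> nat set \<Rightarrow> nat \<Rightarrow> real" where
  "resource_cost2 w1 w2 \<alpha> \<beta> A1 A2 r = (if r \<in> A2 then w2 * (\<alpha> r + \<beta> r * load w1 w2 A1 A2 r) else 0)"

lemma cost1_eq_sum_resource_cost1:
  assumes "finite R" "A1 \<subseteq> R"
  shows "cost1 w1 w2 \<alpha> \<beta> A1 A2 = (\<Sum>r\<in>R. resource_cost1 w1 w2 \<alpha> \<beta> A1 A2 r)"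
  unfolding cost1_def resource_cost1_def sum_distrib_left
  using assms by (simp add: sum.If_cases Int_absorb1)

lemma cost2_eq_sum_resource_cost2:
  assumes "finite R" "A2 \<subseteq> R"
  shows "cost2 w1 w2 \<alpha> \<beta> A1 A2 = (\<Sum>r\<in>R. resource_cost2 w1 w2 \<alpha> \<beta> A1 A2 r)"
  unfolding cost2_def resource_cost2_def sum_distrib_left
  using assms by (simp add: sum.If_cases Int_absorb1)

lemma resource_cost_inequality:
  fixes w1 w2 :: real
  assumes "w1 \<ge> 0" "w2 \<ge> 0" "\<alpha> r \<ge> 0" "\<beta> r \<ge> 0"
  shows "(w1\<^sup>2 + w2\<^sup>2) * resource_cost2 w1 w2 \<alpha> \<beta> A1 B2 r
         + (w1\<^sup>2 + w1 * w2 + w2\<^sup>2) * resource_cost1 w1 w2 \<alpha> \<beta> O1 B2 r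
       \<le> w1 * w2 * resource_cost1 w1 w2 \<alpha> \<beta> A1 A2 r
         + (w1\<^sup>2 + w1 * w2 + w2\<^sup>2)
           * (resource_cost1 w1 w2 \<alpha> \<beta> O1 O2 r + resource_cost2 w1 w2 \<alpha> \<beta> O1 B2 r)"
proof -
  have "0 \<le> \<alpha> r * w1 * w2 * w2" "0 \<le> \<alpha> r * w1 * w1 * w2" "0 \<le> \<beta> r * w1 * w2 * w2 * w2"
    "0 \<le> \<beta> r * w1 * w1 * w2 * w2" "0 \<le> \<beta> r * w1 * w1 * w1 * w2"
    using assms by simp_all
  then show ?thesis
    unfolding resource_cost1_def resource_cost2_def load_def power2_eq_square
    by (cases "r \<in> A1"; cases "r \<in> A2"; cases "r \<in> O1"; cases "r \<in> O2"; cases "r \<in> B2";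
        simp add: algebra_simps; linarith?)
qed

lemma cost_inequality:
  fixes w1 w2 :: real
  assumes w: "w1 \<ge> 0" "w2 \<ge> 0" and R: "finite R" "\<forall>r\<in>R. \<alpha> r \<ge> 0 \<and> \<beta> r \<ge> 0"
    and sub: "A1 \<subseteq> R" "A2 \<subseteq> R" "O1 \<subseteq> R" "O2 \<subseteq> R" "B2 \<subseteq> R"
  shows "(w1\<^sup>2 + w2\<^sup>2) * cost2 w1 w2 \<alpha> \<beta> A1 B2 + (w1\<^sup>2 + w1 * w2 + w2\<^sup>2) * cost1 w1 w2 \<alpha> \<beta> O1 B2
       \<le> w1 * w2 * cost1 w1 w2 \<alpha> \<beta> A1 A2
         + (w1\<^sup>2 + w1 * w2 + w2\<^sup>2) * (cost1 w1 w2 \<alpha> \<beta> O1 O2 + cost2 w1 w2 \<alpha> \<beta> O1 B2)"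
proof -
  have "(\<Sum>r\<in>R. (w1\<^sup>2 + w2\<^sup>2) * resource_cost2 w1 w2 \<alpha> \<beta> A1 B2 r
           + (w1\<^sup>2 + w1 * w2 + w2\<^sup>2) * resource_cost1 w1 w2 \<alpha> \<beta> O1 B2 r)
      \<le> (\<Sum>r\<in>R. w1 * w2 * resource_cost1 w1 w2 \<alpha> \<beta> A1 A2 r
           + (w1\<^sup>2 + w1 * w2 + w2\<^sup>2)
             * (resource_cost1 w1 w2 \<alpha> \<beta> O1 O2 r + resource_cost2 w1 w2 \<alpha> \<beta> O1 B2 r))"
    using R(2) by (intro sum_mono resource_cost_inequality[OF w]) auto
  then show ?thesis
    using sub by (simp add: cost1_eq_sum_resource_cost1[OF R(1)] cost2_eq_sum_resource_cost2[OF R(1)]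
        sum.distrib sum_distrib_left distrib_left)
qed

lemma opt_cost_attained:
  assumes "valid_instance R \<alpha> \<beta> X1 X2"
  obtains O1 O2 where "O1 \<in> X1" "O2 \<in> X2" "opt_cost w1 w2 \<alpha> \<beta> X1 X2 = social_cost w1 w2 \<alpha> \<beta> O1 O2"
proof -
  have "finite (X1 \<times> X2)" "X1 \<times> X2 \<noteq> {}"
    using assms finite_subset[of _ "Pow R"] unfolding valid_instance_def by auto
  then have "opt_cost w1 w2 \<alpha> \<beta> X1 X2 \<in> (\<lambda>(A1, A2). social_cost w1 w2 \<alpha> \<beta> A1 A2) ` (X1 \<times> X2)"
    unfolding opt_cost_def by (intro Min_in) auto
  then show thesis using that by auto
qed

lemma spe_outcome_social_cost_le:
  fixes w1 w2 :: real
  assumes w: "w1 \<ge> 0" "w2 \<ge> 0" and vi: "valid_instance R \<alpha> \<beta> X1 X2"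
    and A: "(A1, A2) \<in> spe_outcomes w1 w2 \<alpha> \<beta> X1 X2"
  shows "(w1\<^sup>2 + w2\<^sup>2) * social_cost w1 w2 \<alpha> \<beta> A1 A2
       \<le> (w1\<^sup>2 + w1 * w2 + w2\<^sup>2) * opt_cost w1 w2 \<alpha> \<beta> X1 X2"
proof -
  define D where "D = w1\<^sup>2 + w2\<^sup>2"
  define \<rho> where "\<rho> = w1\<^sup>2 + w1 * w2 + w2\<^sup>2"
  let ?C1 = "cost1 w1 w2 \<alpha> \<beta>" and ?C2 = "cost2 w1 w2 \<alpha> \<beta>"
  obtain f where A1: "A1 \<in> X1" and A2: "A2 = f A1"
    and reply: "\<And>B. B \<in> X1 \<Longrightarrow> f B \<in> X2 \<and> (\<forall>A2\<in>X2. ?C2 B (f B) \<le> ?C2 B A2)"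
    and leader: "\<And>B. B \<in> X1 \<Longrightarrow> ?C1 A1 (f A1) \<le> ?C1 B (f B)"
    using A unfolding spe_outcomes_def by blast
  obtain O1 O2 where O1: "O1 \<in> X1" and O2: "O2 \<in> X2"
    and opt: "opt_cost w1 w2 \<alpha> \<beta> X1 X2 = social_cost w1 w2 \<alpha> \<beta> O1 O2"
    using opt_cost_attained[OF vi] .
  define B2 where "B2 = f O1"
  have B2: "B2 \<in> X2" using reply[OF O1] by (simp add: B2_def)
  have follower_A: "?C2 A1 A2 \<le> ?C2 A1 B2" using reply[OF A1] B2 by (simp add: A2)
  have follower_O: "?C2 O1 B2 \<le> ?C2 O1 O2" using reply[OF O1] O2 by (simp add: B2_def)
  have leader_O: "?C1 A1 A2 \<le> ?C1 O1 B2" using leader[OF O1] by (simp add: A2 B2_def)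
  have "D * ?C2 A1 B2 + \<rho> * ?C1 O1 B2 \<le> w1 * w2 * ?C1 A1 A2 + \<rho> * (?C1 O1 O2 + ?C2 O1 B2)"
    unfolding D_def \<rho>_def
    using vi A1 reply[OF A1] O1 O2 B2 unfolding valid_instance_def A2
    by (intro cost_inequality[OF w]) auto
  moreover have "D \<ge> 0" "\<rho> \<ge> 0" using w by (simp_all add: D_def \<rho>_def)
  ultimately have "D * (?C1 A1 A2 + ?C2 A1 A2) \<le> \<rho> * (?C1 O1 O2 + ?C2 O1 O2)"
    using mult_left_mono[OF follower_A, of D] mult_left_mono[OF follower_O, of \<rho>]
      mult_left_mono[OF leader_O, of \<rho>]
    by (simp add: D_def \<rho>_def algebra_simps power2_eq_square)
  then show ?thesis by (simp add: D_def \<rho>_def social_cost_def opt)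
qed

lemma poa_weights_le_weight_ratio:
  fixes w1 w2 :: real
  assumes w: "w1 \<ge> 0" "w2 \<ge> 0" "w1 + w2 > 0"
  shows "poa_weights w1 w2 \<le> ereal ((w1\<^sup>2 + w1 * w2 + w2\<^sup>2) / (w1\<^sup>2 + w2\<^sup>2))"
  unfolding poa_weights_def poa_instance_def
proof (clarsimp intro!: SUP_least)
  fix R \<alpha> \<beta> X1 X2 A1 A2
  assume vi: "valid_instance R \<alpha> \<beta> X1 X2" and opt: "opt_cost w1 w2 \<alpha> \<beta> X1 X2 > 0"
    and A: "(A1, A2) \<in> spe_outcomes w1 w2 \<alpha> \<beta> X1 X2"
  have "w1\<^sup>2 + w2\<^sup>2 > 0" using w by (auto simp: sum_power2_gt_zero_iff)
  with opt spe_outcome_social_cost_le[OF w(1,2) vi A]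
  show "social_cost w1 w2 \<alpha> \<beta> A1 A2 / opt_cost w1 w2 \<alpha> \<beta> X1 X2
      \<le> (w1\<^sup>2 + w1 * w2 + w2\<^sup>2) / (w1\<^sup>2 + w2\<^sup>2)"
    by (simp add: divide_simps mult.commute)
qed

lemma weight_ratio_le: "(w1\<^sup>2 + w1 * w2 + w2\<^sup>2) / (w1\<^sup>2 + w2\<^sup>2) \<le> (3/2 :: real)"
proof (cases "w1\<^sup>2 + w2\<^sup>2 > 0")
  case True
  moreover have "0 \<le> (w1 - w2)\<^sup>2" by simp
  ultimately show ?thesis by (simp add: divide_simps power2_diff)
next
  case False
  then show ?thesis by (simp add: sum_power2_gt_zero_iff)
qed

lemma weight_ratio_less:
  assumes "w1 \<noteq> w2"
  shows "(w1\<^sup>2 + w1 * w2 + w2\<^sup>2) / (w1\<^sup>2 + w2\<^sup>2) < (3/2 :: real)"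
proof -
  have "0 < (w1 - w2)\<^sup>2" using assms by simp
  moreover have "w1\<^sup>2 + w2\<^sup>2 > 0" using assms sum_power2_gt_zero_iff by blast
  ultimately show ?thesis by (simp add: divide_simps power2_diff)
qed

lemma spe_outcome_ratio_le_poa_weights:
  assumes "valid_instance R \<alpha> \<beta> X1 X2" "opt_cost w1 w2 \<alpha> \<beta> X1 X2 > 0"
    and "(A1, A2) \<in> spe_outcomes w1 w2 \<alpha> \<beta> X1 X2"
  shows "ereal (social_cost w1 w2 \<alpha> \<beta> A1 A2 / opt_cost w1 w2 \<alpha> \<beta> X1 X2) \<le> poa_weights w1 w2"
proof -
  have "ereal (social_cost w1 w2 \<alpha> \<beta> A1 A2 / opt_cost w1 w2 \<alpha> \<beta> X1 X2) \<le> poa_instance w1 w2 \<alpha> \<beta> X1 X2"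
    unfolding poa_instance_def using assms(3) by (rule SUP_upper2) simp
  also have "\<dots> \<le> poa_weights w1 w2"
    unfolding poa_weights_def using assms(1,2) by (intro SUP_upper2[where i="(R, \<alpha>, \<beta>, X1, X2)"]) auto
  finally show ?thesis .
qed

lemma poa_weights_equal_ge_three_halves:
  fixes w :: real
  assumes w: "w > 0"
  shows "ereal (3/2) \<le> poa_weights w w"
proof -
  define \<alpha> :: "nat \<Rightarrow> real" where "\<alpha> = (\<lambda>r. if r = 0 then w/2 else if r = 1 then w else 0)"
  define \<beta> :: "nat \<Rightarrow> real" where "\<beta> = (\<lambda>r. if r = 2 then 1/2 else 0)"
  define X1 :: "nat set set" where "X1 = {{2}, {0}}"
  define X2 :: "nat set set" where "X2 = {{1}, {2}}"
  txt \<open>After the first move \<open>{2}\<close> player 2 is indifferent and answers \<open>{1}\<close>; player 1 is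
    then indifferent between \<open>{2}\<close> and the optimal \<open>{0}\<close>.\<close>
  define reply :: "nat set \<Rightarrow> nat set" where "reply = (\<lambda>B. if B = {2} then {1} else {2})"
  define c where "c = w\<^sup>2 / 2"
  have c: "c > 0" using w by (simp add: c_def)
  have costs:
    "cost1 w w \<alpha> \<beta> {2} {1} = c" "cost2 w w \<alpha> \<beta> {2} {1} = 2 * c"
    "cost1 w w \<alpha> \<beta> {2} {2} = 2 * c" "cost2 w w \<alpha> \<beta> {2} {2} = 2 * c"
    "cost1 w w \<alpha> \<beta> {0} {1} = c" "cost2 w w \<alpha> \<beta> {0} {1} = 2 * c"
    "cost1 w w \<alpha> \<beta> {0} {2} = c" "cost2 w w \<alpha> \<beta> {0} {2} = c"
    by (simp_all add: cost1_def cost2_def load_def \<alpha>_def \<beta>_def c_def power2_eq_square)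
  note costs = costs costs[unfolded One_nat_def]
  have valid: "valid_instance {0, 1, 2} \<alpha> \<beta> X1 X2"
    using w by (auto simp: valid_instance_def \<alpha>_def \<beta>_def X1_def X2_def)
  have opt: "opt_cost w w \<alpha> \<beta> X1 X2 = 2 * c"
    unfolding opt_cost_def
    by (intro Min_eqI) (use c in \<open>auto simp: X1_def X2_def social_cost_def costs\<close>)
  have spe: "({2}, {1}) \<in> spe_outcomes w w \<alpha> \<beta> X1 X2"
    unfolding spe_outcomes_def
    by (intro CollectI exI[where x="{2}"] exI[where x=reply])
      (use c in \<open>auto simp: X1_def X2_def reply_def costs\<close>)
  have ratio: "social_cost w w \<alpha> \<beta> {2} {1} / opt_cost w w \<alpha> \<beta> X1 X2 = 3/2"
    using c by (simp add: opt social_cost_def costs)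
  have "opt_cost w w \<alpha> \<beta> X1 X2 > 0" using c by (simp add: opt)
  from spe_outcome_ratio_le_poa_weights[OF valid this spe] show ?thesis
    by (simp only: ratio)
qed

lemma poa_weights_le_three_halves:
  fixes w1 w2 :: real
  assumes "w1 \<ge> 0" "w2 \<ge> 0" "w1 + w2 > 0"
  shows "poa_weights w1 w2 \<le> ereal (3/2)"
  using poa_weights_le_weight_ratio[OF assms] weight_ratio_le[of w1 w2] by (simp add: order_trans)

lemma poa_weights_less_three_halves:
  fixes w1 w2 :: real
  assumes "w1 \<ge> 0" "w2 \<ge> 0" "w1 \<noteq> w2"
  shows "poa_weights w1 w2 < ereal (3/2)"
proof -
  have "w1 + w2 > 0" using assms by linarith
  then show ?thesis
    using poa_weights_le_weight_ratio[OF assms(1,2)] weight_ratio_less[OF assms(3)]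
    by (simp add: le_less_trans)
qed

lemma poa_weights_equal:
  fixes w :: real
  assumes "w > 0"
  shows "poa_weights w w = ereal (3/2)"
  using poa_weights_le_three_halves[of w w] poa_weights_equal_ge_three_halves[OF assms] assms by simp

theorem corollary6:
  shows "(SUP w \<in> {(w1, w2). w1 \<ge> 0 \<and> w2 \<ge> 0 \<and> w1 + w2 > (0::real)}. poa_weights (fst w) (snd w)) = ereal (3/2)
    \<and> (\<forall>w1 w2::real. w1 \<ge> 0 \<longrightarrow> w2 \<ge> 0 \<longrightarrow> w1 + w2 > 0 \<longrightarrow>
         (poa_weights w1 w2 = ereal (3/2) \<longleftrightarrow> w1 = w2))"
proof (intro conjI allI impI)
  show "(SUP w \<in> {(w1, w2). w1 \<ge> 0 \<and> w2 \<ge> 0 \<and> w1 + w2 > (0::real)}. poa_weights (fst w) (snd w))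
      = ereal (3/2)"
  proof (rule antisym)
    show "(SUP w \<in> {(w1, w2). w1 \<ge> 0 \<and> w2 \<ge> 0 \<and> w1 + w2 > (0::real)}. poa_weights (fst w) (snd w))
        \<le> ereal (3/2)"
      by (rule SUP_least) (auto intro: poa_weights_le_three_halves)
    show "ereal (3/2)
        \<le> (SUP w \<in> {(w1, w2). w1 \<ge> 0 \<and> w2 \<ge> 0 \<and> w1 + w2 > (0::real)}. poa_weights (fst w) (snd w))"
      by (rule SUP_upper2[where i="(1, 1)"]) (simp_all add: poa_weights_equal)
  qed
next
  fix w1 w2 :: real
  assume "w1 \<ge> 0" "w2 \<ge> 0" "w1 + w2 > 0"
  then show "poa_weights w1 w2 = ereal (3/2) \<longleftrightarrow> w1 = w2"
    using poa_weights_less_three_halves[of w1 w2] poa_weights_equal[of w1] by force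
qed

end
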